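(* Let $D$ be a digraph with $n$ vertices and $a$ arcs, with outdegrees $d_1^+,\dots,d_n^+$, and let $\alpha\in[0,1)$. Then $$\|D_\alpha\|_*\le \sqrt{n\Big[(1-\alpha)^2a+\alpha^2\sum_{i=1}^n (d_i^+)^2\Big]},$$ with equality if and only if either (a) $D$ has no arcs, or (b) $\alpha=0$ and $D$ is a direct sum (vertex-disjoint union) of directed cycles.
   Context: Digraphs are simple: a finite vertex set and a set of arcs, which are ordered pairs of distinct vertices, with no parallel arcs (a pair of opposite arcs is allowed). A directed cycle of order $m\ge 2$ has vertices $w_1,\dots,w_m$ and arcs $(w_1,w_2),\dots,(w_{m-1},w_m),(w_m,w_1)$. For a digraph $D$ on vertices $v_1,\dots,v_n$, the adjacency matrix $A(D)=(a_{ij})$ has $a_{ij}=1$ if $(v_i,v_j)$ is an arc and $0$ otherwise; $d_i^+$ is the outdegree of $v_i$, and $\Delta^+(D)=\mathrm{diag}(d_1^+,\dots,d_n^+)$. For $\alpha\in[0,1)$, $A_\alpha(D)=\alpha\Delta^+(D)+(1-\alpha)A(D)$. The $\alpha$-trace norm $\|D_\alpha\|_*$ is the sum of the singular values of $A_\alpha(D)$, i.e. of the nonnegative square roots of the eigenvalues of $A_\alpha(D)A_\alpha(D)^T$, with multiplicity. *)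

theory Defs
  imports "Jordan_Normal_Form.Char_Poly"
begin

text \<open>Digraphs on vertex set {0..<n}; arcs E are ordered pairs of distinct vertices.\<close>

definition outdeg :: "(nat \<times> nat) set \<Rightarrow> nat \<Rightarrow> nat" where
  "outdeg E i = card {j. (i, j) \<in> E}"

definition adj_mat :: "nat \<Rightarrow> (nat \<times> nat) set \<Rightarrow> real mat" where
  "adj_mat n E = mat n n (\<lambda>(i, j). if (i, j) \<in> E then 1 else 0)"

definition outdeg_mat :: "nat \<Rightarrow> (nat \<times> nat) set \<Rightarrow> real mat" where
  "outdeg_mat n E = mat n n (\<lambda>(i, j). if i = j then real (outdeg E i) else 0)"

definition A_alpha :: "real \<Rightarrow> nat \<Rightarrow> (nat \<times> nat) set \<Rightarrow> real mat" where
  "A_alpha \<alpha> n E = \<alpha> \<cdot>\<^sub>m outdeg_mat n E + (1 - \<alpha>) \<cdot>\<^sub>m adj_mat n E"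

text \<open>Sum of singular values: sum of the nonnegative square roots of the eigenvalues
  of M M^T counted with multiplicity (roots of the characteristic polynomial, which
  are all real since M M^T is real symmetric).\<close>
definition trace_norm :: "real mat \<Rightarrow> real" where
  "trace_norm M = (let p = char_poly (M * transpose_mat M) in
     (\<Sum>x\<in>{y. poly p y = 0}. real (order x p) * sqrt x))"

definition alpha_trace_norm :: "real \<Rightarrow> nat \<Rightarrow> (nat \<times> nat) set \<Rightarrow> real" where
  "alpha_trace_norm \<alpha> n E = trace_norm (A_alpha \<alpha> n E)"

definition cycle_arcs :: "nat list \<Rightarrow> (nat \<times> nat) set" where
  "cycle_arcs ws = {(ws ! i, ws ! ((i + 1) mod length ws)) | i. i < length ws}"

definition direct_sum_of_cycles :: "nat \<Rightarrow> (nat \<times> nat) set \<Rightarrow> bool" where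
  "direct_sum_of_cycles n E \<longleftrightarrow>
     (\<exists>C :: nat list set.
        (\<forall>ws\<in>C. distinct ws \<and> length ws \<ge> 2) \<and>
        (\<forall>ws1\<in>C. \<forall>ws2\<in>C. ws1 \<noteq> ws2 \<longrightarrow> set ws1 \<inter> set ws2 = {}) \<and>
        (\<Union>ws\<in>C. set ws) = {0..<n} \<and>
        E = (\<Union>ws\<in>C. cycle_arcs ws))"

end

theory Submission
  imports Defs "Jordan_Normal_Form.Schur_Decomposition" "HOL-Combinatorics.Orbits"
begin

(* The singular values of M are the square roots of the eigenvalues r_1, ..., r_n >= 0 of the
   Gram matrix S = M M^T, so by Cauchy-Schwarz the trace norm sqrt r_1 + ... + sqrt r_n is at most
   sqrt (n (r_1 + ... + r_n)) = sqrt (n tr S), with equality iff all r_i coincide, that is, as S is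
   symmetric, iff S is a scalar matrix. For M = A_alpha(D), tr S is the sum of the squared entries,
   which is the bound of the theorem. If S = c I and D has an arc (i, j), the diagonal entries of S
   give c > 0 and d_j^+ > 0, and the (i, j) entry of S is at least (1 - alpha) alpha d_j^+, so
   alpha = 0. For alpha = 0, S = c I says that every outdegree is c and no vertex is the head of two
   arcs, so c n = |E| <= n forces c = 1: D is the digraph of a fixed-point-free permutation, i.e. a
   vertex-disjoint union of directed cycles. *)

section \<open>Traces and spectra of Gram matrices\<close>

definition mat_trace :: "'a :: comm_ring_1 mat \<Rightarrow> 'a" where
  "mat_trace A = (\<Sum>i = 0..<dim_row A. A $$ (i, i))"

lemma mat_trace_mult_comm:
  assumes A: "A \<in> carrier_mat n m" and B: "B \<in> carrier_mat m n"
  shows "mat_trace (A * B) = mat_trace (B * A)"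
proof -
  have "mat_trace (A * B) = (\<Sum>i = 0..<n. \<Sum>k = 0..<m. A $$ (i, k) * B $$ (k, i))"
    using A B by (auto simp: mat_trace_def scalar_prod_def intro!: sum.cong)
  also have "\<dots> = (\<Sum>k = 0..<m. \<Sum>i = 0..<n. B $$ (k, i) * A $$ (i, k))"
    by (subst sum.swap) (simp add: mult.commute)
  also have "\<dots> = mat_trace (B * A)"
    using A B by (auto simp: mat_trace_def scalar_prod_def intro!: sum.cong)
  finally show ?thesis .
qed

lemma mat_trace_similar:
  assumes "similar_mat_wit A B P Q"
  shows "mat_trace A = mat_trace B"
proof -
  define n where "n = dim_row A"
  from similar_mat_witD[OF n_def assms]
  have A: "A = P * B * Q" and QP: "Q * P = 1\<^sub>m n"
    and B: "B \<in> carrier_mat n n" and P: "P \<in> carrier_mat n n" and Q: "Q \<in> carrier_mat n n"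
    by auto
  have "mat_trace A = mat_trace (P * (B * Q))"
    using A B P Q by simp
  also have "\<dots> = mat_trace ((B * Q) * P)"
    using B P Q by (intro mat_trace_mult_comm) auto
  also have "(B * Q) * P = B"
    using B P Q QP by simp
  finally show ?thesis .
qed

lemma upper_triangular_mult_diag:
  assumes A: "A \<in> carrier_mat n n" and B: "B \<in> carrier_mat n n"
    and "upper_triangular A" "upper_triangular B" and i: "i < n"
  shows "(A * B) $$ (i, i) = A $$ (i, i) * B $$ (i, i)"
proof -
  have off_diag: "A $$ (i, k) * B $$ (k, i) = 0" if "k < n" "k \<noteq> i" for k
  proof (cases "k < i")
    case True
    then show ?thesis using upper_triangularD[OF \<open>upper_triangular A\<close> _ ] A i by simp
  next
    case False
    then show ?thesis using upper_triangularD[OF \<open>upper_triangular B\<close> _ ] B that by simp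
  qed
  have "(A * B) $$ (i, i) = (\<Sum>k = 0..<n. A $$ (i, k) * B $$ (k, i))"
    using A B i by (simp add: scalar_prod_def)
  also have "\<dots> = (\<Sum>k = 0..<n. if k = i then A $$ (i, i) * B $$ (i, i) else 0)"
    by (rule sum.cong) (auto simp: off_diag)
  finally show ?thesis using i by simp
qed

lemma length_eigenvalues:
  assumes "A \<in> carrier_mat n n" and "char_poly A = (\<Prod>e\<leftarrow>es. [:- e, 1:])"
  shows "length es = n"
  using degree_monic_char_poly[OF assms(1)] degree_linear_factors[of uminus es] assms(2) by simp

lemma mat_trace_eigenvalues:
  fixes A :: "'a :: conjugatable_ordered_field mat"
  assumes A: "A \<in> carrier_mat n n" and cp: "char_poly A = (\<Prod>e\<leftarrow>es. [:- e, 1:])"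
  shows "mat_trace A = sum_list es" and "mat_trace (A * A) = sum_list (map (\<lambda>e. e\<^sup>2) es)"
proof -
  obtain B P Q where "schur_decomposition A es = (B, P, Q)"
    by (cases "schur_decomposition A es")
  from schur_decomposition[OF A cp this]
  have sim: "similar_mat_wit A B P Q" and ut: "upper_triangular B" and diag: "diag_mat B = es"
    by auto
  have B: "B \<in> carrier_mat n n" using similar_mat_witD2[OF A sim] by auto
  have sum_diag: "mat_trace C = (\<Sum>i = 0..<n. C $$ (i, i))" if "C \<in> carrier_mat n n" for C :: "'a mat"
    using that by (simp add: mat_trace_def)
  have es: "es = map (\<lambda>i. B $$ (i, i)) [0..<n]"
    using B diag by (simp add: diag_mat_def)
  show "mat_trace A = sum_list es"
    using mat_trace_similar[OF sim] B by (simp add: es sum_diag sum_list_sum_nth)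
  have "similar_mat_wit (A * A) (B * B) P Q"
    using similar_mat_wit_pow[OF sim, of 2] A B by (simp add: numeral_2_eq_2)
  then have "mat_trace (A * A) = mat_trace (B * B)"
    by (rule mat_trace_similar)
  also have "\<dots> = (\<Sum>i = 0..<n. (B $$ (i, i))\<^sup>2)"
    using B ut by (simp add: sum_diag upper_triangular_mult_diag[OF B B ut ut] power2_eq_square
        del: index_mult_mat)
  finally show "mat_trace (A * A) = sum_list (map (\<lambda>e. e\<^sup>2) es)"
    by (simp add: es sum_list_sum_nth)
qed

lemma gram_index:
  assumes "A \<in> carrier_mat n m" "i < n" "j < n"
  shows "(A * transpose_mat A) $$ (i, j) = (\<Sum>k = 0..<m. A $$ (i, k) * A $$ (j, k))"
  using assms by (simp add: scalar_prod_def)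

lemma gram_index_ge:
  fixes A :: "real mat"
  assumes "A \<in> carrier_mat n m" and "\<forall>i < n. \<forall>k < m. 0 \<le> A $$ (i, k)"
    and "i < n" "j < n" "k < m"
  shows "A $$ (i, k) * A $$ (j, k) \<le> (A * transpose_mat A) $$ (i, j)"
  unfolding gram_index[OF assms(1,3,4)]
  by (rule member_le_sum) (use assms in auto)

lemma mat_trace_mult_transpose:
  assumes "A \<in> carrier_mat n m"
  shows "mat_trace (A * transpose_mat A) = (\<Sum>i = 0..<n. \<Sum>j = 0..<m. (A $$ (i, j))\<^sup>2)"
  using assms by (auto simp: mat_trace_def scalar_prod_def power2_eq_square intro!: sum.cong)

lemma conjugate_of_real_mat_mult_vec:
  fixes M :: "real mat" and v :: "complex vec"
  assumes "M \<in> carrier_mat n m" and "v \<in> carrier_vec m"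
  shows "conjugate (map_mat complex_of_real M *\<^sub>v v) = map_mat complex_of_real M *\<^sub>v conjugate v"
  using assms by (intro eq_vecI) (auto simp: scalar_prod_def cnj_sum)

lemma gram_eigenvalue_nonneg_real:
  fixes M :: "real mat"
  assumes M: "M \<in> carrier_mat n m"
    and ev: "eigenvalue (map_mat complex_of_real (M * transpose_mat M)) e"
  shows "\<exists>r \<ge> 0. e = complex_of_real r"
proof -
  let ?N = "map_mat complex_of_real M"
  have N: "?N \<in> carrier_mat n m" and NT: "transpose_mat ?N \<in> carrier_mat m n"
    using M by auto
  have gram: "map_mat complex_of_real (M * transpose_mat M) = ?N * transpose_mat ?N"
    using M by (simp add: of_real_hom.mat_hom_mult map_mat_transpose)
  obtain v where v: "v \<in> carrier_vec n" "v \<noteq> 0\<^sub>v n" and ev_v: "(?N * transpose_mat ?N) *\<^sub>v v = e \<cdot>\<^sub>v v"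
    using ev M unfolding eigenvalue_def eigenvector_def gram by auto
  \<comment> \<open>\<open>e |v|\<^sup>2 = \<langle>M M\<^sup>T v, v\<rangle> = |M\<^sup>T v|\<^sup>2\<close>\<close>
  define w where "w = transpose_mat ?N *\<^sub>v v"
  have w: "w \<in> carrier_vec m" using NT v by (simp add: w_def)
  have "e * (v \<bullet>c v) = ((?N * transpose_mat ?N) *\<^sub>v v) \<bullet>c v"
    using v by (simp add: ev_v)
  also have "\<dots> = (transpose_mat (transpose_mat ?N) *\<^sub>v w) \<bullet> conjugate v"
    using N NT v by (simp add: w_def)
  also have "\<dots> = w \<bullet> (transpose_mat ?N *\<^sub>v conjugate v)"
    using NT v w by (intro transpose_vec_mult_scalar) auto
  also have "transpose_mat ?N *\<^sub>v conjugate v = conjugate w"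
    using M v by (simp add: w_def map_mat_transpose conjugate_of_real_mat_mult_vec[of _ m n])
  finally have eq: "e * (v \<bullet>c v) = w \<bullet>c w" .
  have "0 < v \<bullet>c v" and "0 \<le> w \<bullet>c w"
    using v by auto
  then have p: "v \<bullet>c v = complex_of_real (Re (v \<bullet>c v))" "Re (v \<bullet>c v) > 0"
    and q: "w \<bullet>c w = complex_of_real (Re (w \<bullet>c w))" "Re (w \<bullet>c w) \<ge> 0"
    by (simp_all add: less_complex_def less_eq_complex_def complex_eq_iff)
  have "v \<bullet>c v \<noteq> 0" using p(2) by auto
  then have "e = (w \<bullet>c w) / (v \<bullet>c v)"
    using eq by (simp add: eq_divide_eq)
  also have "\<dots> = complex_of_real (Re (w \<bullet>c w) / Re (v \<bullet>c v))"
    by (metis p(1) q(1) of_real_divide)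
  finally have "e = complex_of_real (Re (w \<bullet>c w) / Re (v \<bullet>c v))" .
  moreover have "Re (w \<bullet>c w) / Re (v \<bullet>c v) \<ge> 0"
    using p(2) q(2) by simp
  ultimately show ?thesis by blast
qed

lemma gram_char_poly_nonneg_linear_factors:
  fixes M :: "real mat"
  assumes M: "M \<in> carrier_mat n m"
  obtains rs where "char_poly (M * transpose_mat M) = (\<Prod>r\<leftarrow>rs. [:- r, 1:])"
    and "\<forall>r \<in> set rs. r \<ge> 0"
proof -
  interpret of_real_poly: map_poly_inj_comm_ring_hom "complex_of_real" ..
  let ?S = "M * transpose_mat M"
  have S: "?S \<in> carrier_mat n n" and SC: "map_mat complex_of_real ?S \<in> carrier_mat n n"
    using M by auto
  obtain es where es: "char_poly (map_mat complex_of_real ?S) = (\<Prod>e\<leftarrow>es. [:- e, 1:])"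
    using char_poly_factorized[OF SC] by auto
  have "\<exists>r \<ge> 0. e = complex_of_real r" if "e \<in> set es" for e
  proof -
    have "poly (char_poly (map_mat complex_of_real ?S)) e = 0"
      unfolding es using that by (rule linear_poly_root)
    then show ?thesis
      using M eigenvalue_root_char_poly[OF SC] by (intro gram_eigenvalue_nonneg_real) auto
  qed
  then obtain rs where rs: "es = map complex_of_real rs" "\<forall>r \<in> set rs. r \<ge> 0"
    by (induction es) (auto, metis list.simps(9) set_ConsD)
  have "map_poly complex_of_real (char_poly ?S) = map_poly complex_of_real (\<Prod>r\<leftarrow>rs. [:- r, 1:])"
    by (simp add: of_real_hom.char_poly_hom[OF S, symmetric] es rs(1)
        of_real_poly.hom_prod_list o_def)
  then show ?thesis
    using that rs(2) of_real_poly.injectivity by blast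
qed

section \<open>The trace norm\<close>

lemma order_linear_factors:
  fixes rs :: "'a :: idom list"
  shows "Polynomial.order x (\<Prod>r\<leftarrow>rs. [:- r, 1:]) = count_list rs x"
proof (induction rs)
  case (Cons r rs)
  have "[:- r, 1:] * (\<Prod>r\<leftarrow>rs. [:- r, 1:]) \<noteq> 0"
    by (rule no_zero_divisors) (auto simp: prod_list_zero_iff)
  then have "Polynomial.order x (\<Prod>r\<leftarrow>r # rs. [:- r, 1:])
      = Polynomial.order x [:- r, 1:] + Polynomial.order x (\<Prod>r\<leftarrow>rs. [:- r, 1:])"
    unfolding list.map prod_list.Cons by (rule order_mult)
  then show ?case
    using Cons by (simp add: order_linear')
qed (simp add: order_0I)

lemma sum_list_map_eq_sum_of_nat_count:
  fixes f :: "'a \<Rightarrow> 'b :: semiring_1"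
  shows "sum_list (map f xs) = (\<Sum>x \<in> set xs. of_nat (count_list xs x) * f x)"
proof (induction xs)
  case (Cons y xs)
  have "(\<Sum>x \<in> set (y # xs). of_nat (count_list (y # xs) x) * f x)
      = (\<Sum>x \<in> insert y (set xs). of_nat (count_list xs x) * f x + (if x = y then f x else 0))"
    by (rule sum.cong) (auto simp: algebra_simps)
  also have "\<dots> = (\<Sum>x \<in> insert y (set xs). of_nat (count_list xs x) * f x) + f y"
    by (simp add: sum.distrib)
  also have "(\<Sum>x \<in> insert y (set xs). of_nat (count_list xs x) * f x)
      = (\<Sum>x \<in> set xs. of_nat (count_list xs x) * f x)"
    by (cases "y \<in> set xs") (auto simp: insert_absorb)
  finally show ?case
    using Cons by (simp add: add.commute)
qed simp

lemma trace_norm_eq_sum_sqrt: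
  assumes "char_poly (M * transpose_mat M) = (\<Prod>r\<leftarrow>rs. [:- r, 1:])"
  shows "trace_norm M = sum_list (map sqrt rs)"
proof -
  have "{y. poly (\<Prod>r\<leftarrow>rs. [:- r, 1:]) y = 0} = set rs"
    by (auto simp: poly_prod_list_zero_iff)
  then show ?thesis
    by (simp add: trace_norm_def assms order_linear_factors sum_list_map_eq_sum_of_nat_count)
qed

lemma sum_sum_squared_differences:
  fixes x :: "'a \<Rightarrow> real"
  shows "(\<Sum>i\<in>A. \<Sum>j\<in>A. (x i - x j)\<^sup>2) = 2 * card A * (\<Sum>i\<in>A. (x i)\<^sup>2) - 2 * (\<Sum>i\<in>A. x i)\<^sup>2"
proof -
  have "(\<Sum>i\<in>A. \<Sum>j\<in>A. (x i - x j)\<^sup>2)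
      = (\<Sum>i\<in>A. \<Sum>j\<in>A. (x i)\<^sup>2) + (\<Sum>i\<in>A. \<Sum>j\<in>A. (x j)\<^sup>2) - 2 * (\<Sum>i\<in>A. \<Sum>j\<in>A. x i * x j)"
    by (simp add: power2_diff sum.distrib sum_subtractf sum_distrib_left mult.assoc)
  also have "(\<Sum>i\<in>A. \<Sum>j\<in>A. x i * x j) = (\<Sum>i\<in>A. x i)\<^sup>2"
    by (simp add: power2_eq_square sum_product)
  finally show ?thesis
    by (simp add: sum_distrib_left mult.assoc)
qed

lemma sum_squared_le_card_mult_sum_squares:
  fixes x :: "'a \<Rightarrow> real"
  shows "(\<Sum>i\<in>A. x i)\<^sup>2 \<le> card A * (\<Sum>i\<in>A. (x i)\<^sup>2)"
  using sum_sum_squared_differences[of x A] sum_nonneg[of A "\<lambda>i. \<Sum>j\<in>A. (x i - x j)\<^sup>2"]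
  by (simp add: sum_nonneg)

lemma sum_squared_eq_card_mult_sum_squares_iff:
  fixes x :: "'a \<Rightarrow> real"
  assumes "finite A"
  shows "(\<Sum>i\<in>A. x i)\<^sup>2 = card A * (\<Sum>i\<in>A. (x i)\<^sup>2) \<longleftrightarrow> (\<forall>i\<in>A. \<forall>j\<in>A. x i = x j)"
proof -
  have "(\<Sum>i\<in>A. x i)\<^sup>2 = card A * (\<Sum>i\<in>A. (x i)\<^sup>2) \<longleftrightarrow> (\<Sum>i\<in>A. \<Sum>j\<in>A. (x i - x j)\<^sup>2) = 0"
    unfolding sum_sum_squared_differences by auto
  also have "\<dots> \<longleftrightarrow> (\<forall>i\<in>A. \<forall>j\<in>A. x i = x j)"
    using assms by (simp add: sum_nonneg sum_nonneg_eq_0_iff)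
  finally show ?thesis .
qed

lemma sum_list_squared_le_length_mult_sum_squares:
  fixes xs :: "real list"
  shows "(sum_list xs)\<^sup>2 \<le> length xs * sum_list (map (\<lambda>x. x\<^sup>2) xs)"
  using sum_squared_le_card_mult_sum_squares[of "(!) xs" "{0..<length xs}"]
  by (simp add: sum_list_sum_nth)

lemma sum_list_squared_eq_length_mult_sum_squares_iff:
  fixes xs :: "real list"
  shows "(sum_list xs)\<^sup>2 = length xs * sum_list (map (\<lambda>x. x\<^sup>2) xs)
    \<longleftrightarrow> (\<forall>x \<in> set xs. \<forall>y \<in> set xs. x = y)"
  using sum_squared_eq_card_mult_sum_squares_iff[of "{0..<length xs}" "(!) xs"]
  unfolding all_set_conv_all_nth by (simp add: sum_list_sum_nth Ball_def)

lemma symmetric_eq_smult_one_iff_eigenvalues: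
  fixes S :: "real mat"
  assumes S: "S \<in> carrier_mat n n" and sym: "transpose_mat S = S"
    and cp: "char_poly S = (\<Prod>r\<leftarrow>rs. [:- r, 1:])"
  shows "S = c \<cdot>\<^sub>m 1\<^sub>m n \<longleftrightarrow> (\<forall>r \<in> set rs. r = c)"
proof -
  have len: "length rs = n"
    by (rule length_eigenvalues[OF S cp])
  \<comment> \<open>The squared Frobenius distance of \<open>S\<close> from \<open>c I\<close>, computed from the entries and from the spectrum.\<close>
  have "(\<Sum>i = 0..<n. \<Sum>j = 0..<n. (S $$ (i, j) - (if i = j then c else 0))\<^sup>2)
      = (\<Sum>i = 0..<n. \<Sum>j = 0..<n. (S $$ (i, j))\<^sup>2) - 2 * c * (\<Sum>i = 0..<n. S $$ (i, i)) + n * c\<^sup>2"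
  proof -
    have "(S $$ (i, j) - (if i = j then c else 0))\<^sup>2
        = (S $$ (i, j))\<^sup>2 + (if j = i then c\<^sup>2 - 2 * c * S $$ (i, i) else 0)" for i j
      by (auto simp: power2_diff)
    then show ?thesis
      by (simp add: sum.distrib sum_subtractf sum_distrib_left)
  qed
  also have "\<dots> = mat_trace (S * S) - 2 * c * mat_trace S + n * c\<^sup>2"
    using mat_trace_mult_transpose[OF S] S sym by (simp add: mat_trace_def)
  also have "\<dots> = (\<Sum>r\<leftarrow>rs. (r - c)\<^sup>2)"
  proof -
    have "(\<Sum>r\<leftarrow>rs. (r - c)\<^sup>2) = (\<Sum>r\<leftarrow>rs. r\<^sup>2) - 2 * c * sum_list rs + length rs * c\<^sup>2"
      by (induction rs) (simp_all add: power2_diff algebra_simps)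
    then show ?thesis
      using len by (simp add: mat_trace_eigenvalues[OF S cp])
  qed
  finally have frobenius: "(\<Sum>i = 0..<n. \<Sum>j = 0..<n. (S $$ (i, j) - (if i = j then c else 0))\<^sup>2)
      = (\<Sum>r\<leftarrow>rs. (r - c)\<^sup>2)" .
  have "S = c \<cdot>\<^sub>m 1\<^sub>m n \<longleftrightarrow> (\<forall>i < n. \<forall>j < n. S $$ (i, j) = (if i = j then c else 0))"
    using S by (auto intro: eq_matI)
  also have "\<dots> \<longleftrightarrow> (\<Sum>i = 0..<n. \<Sum>j = 0..<n. (S $$ (i, j) - (if i = j then c else 0))\<^sup>2) = 0"
    by (auto simp: sum_nonneg sum_nonneg_eq_0_iff)
  also have "\<dots> \<longleftrightarrow> (\<forall>r \<in> set rs. r = c)"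
    unfolding frobenius by (subst sum_list_nonneg_eq_0_iff) auto
  finally show ?thesis .
qed

lemma singular_values_exist:
  fixes M :: "real mat"
  assumes M: "M \<in> carrier_mat n m"
  obtains xs where "length xs = n" and "\<forall>x \<in> set xs. x \<ge> 0" and "trace_norm M = sum_list xs"
    and "mat_trace (M * transpose_mat M) = sum_list (map (\<lambda>x. x\<^sup>2) xs)"
    and "(\<exists>c. M * transpose_mat M = c \<cdot>\<^sub>m 1\<^sub>m n) \<longleftrightarrow> (\<forall>x \<in> set xs. \<forall>y \<in> set xs. x = y)"
proof -
  let ?S = "M * transpose_mat M"
  have S: "?S \<in> carrier_mat n n" and sym: "transpose_mat ?S = ?S"
    using M by (auto simp: transpose_mult)
  obtain rs where cp: "char_poly ?S = (\<Prod>r\<leftarrow>rs. [:- r, 1:])" and rs: "\<forall>r \<in> set rs. r \<ge> 0"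
    using gram_char_poly_nonneg_linear_factors[OF M] .
  have "(\<exists>c. ?S = c \<cdot>\<^sub>m 1\<^sub>m n) \<longleftrightarrow> (\<exists>c. \<forall>r \<in> set rs. r = c)"
    using symmetric_eq_smult_one_iff_eigenvalues[OF S sym cp] by simp
  also have "\<dots> \<longleftrightarrow> (\<forall>r \<in> set rs. \<forall>r' \<in> set rs. r = r')"
  proof
    assume "\<exists>c. \<forall>r \<in> set rs. r = c"
    then obtain c where "\<forall>r \<in> set rs. r = c" ..
    then show "\<forall>r \<in> set rs. \<forall>r' \<in> set rs. r = r'"
      by metis
  next
    assume "\<forall>r \<in> set rs. \<forall>r' \<in> set rs. r = r'"
    then show "\<exists>c. \<forall>r \<in> set rs. r = c"
      by (cases rs) auto
  qed
  finally have scalar: "(\<exists>c. ?S = c \<cdot>\<^sub>m 1\<^sub>m n)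
      \<longleftrightarrow> (\<forall>x \<in> set (map sqrt rs). \<forall>y \<in> set (map sqrt rs). x = y)"
    by simp
  have len: "length (map sqrt rs) = n"
    using length_eigenvalues[OF S cp] by simp
  have nonneg: "\<forall>x \<in> set (map sqrt rs). x \<ge> 0"
    using rs by simp
  have tr: "mat_trace ?S = sum_list (map (\<lambda>x. x\<^sup>2) (map sqrt rs))"
    using rs by (simp add: mat_trace_eigenvalues(1)[OF S cp] o_def map_idI)
  show ?thesis
    by (rule that[OF len nonneg trace_norm_eq_sum_sqrt[OF cp] tr scalar])
qed

lemma trace_norm_le_sqrt_trace_gram:
  fixes M :: "real mat"
  assumes "M \<in> carrier_mat n m"
  shows "trace_norm M \<le> sqrt (n * mat_trace (M * transpose_mat M))"
proof -
  obtain xs where "length xs = n" and "trace_norm M = sum_list xs"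
    and "mat_trace (M * transpose_mat M) = sum_list (map (\<lambda>x. x\<^sup>2) xs)"
    using singular_values_exist[OF assms] by metis
  then show ?thesis
    using sum_list_squared_le_length_mult_sum_squares[of xs] by (simp add: real_le_rsqrt)
qed

lemma trace_norm_eq_sqrt_trace_gram_iff:
  fixes M :: "real mat"
  assumes "M \<in> carrier_mat n m"
  shows "trace_norm M = sqrt (n * mat_trace (M * transpose_mat M))
    \<longleftrightarrow> (\<exists>c. M * transpose_mat M = c \<cdot>\<^sub>m 1\<^sub>m n)"
proof -
  obtain xs where len: "length xs = n" and nonneg: "\<forall>x \<in> set xs. x \<ge> 0"
    and tn: "trace_norm M = sum_list xs"
    and tr: "mat_trace (M * transpose_mat M) = sum_list (map (\<lambda>x. x\<^sup>2) xs)"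
    and scalar: "(\<exists>c. M * transpose_mat M = c \<cdot>\<^sub>m 1\<^sub>m n) \<longleftrightarrow> (\<forall>x \<in> set xs. \<forall>y \<in> set xs. x = y)"
    using singular_values_exist[OF assms] by blast
  have "0 \<le> sum_list xs"
    using nonneg by (auto intro!: sum_list_nonneg)
  moreover have "0 \<le> n * sum_list (map (\<lambda>x. x\<^sup>2) xs)"
    by (intro mult_nonneg_nonneg) (auto intro!: sum_list_nonneg)
  ultimately have "sum_list xs = sqrt (n * sum_list (map (\<lambda>x. x\<^sup>2) xs))
      \<longleftrightarrow> (sum_list xs)\<^sup>2 = n * sum_list (map (\<lambda>x. x\<^sup>2) xs)"
    by (metis real_sqrt_pow2 real_sqrt_unique)
  then show ?thesis
    using sum_list_squared_eq_length_mult_sum_squares_iff[of xs] by (simp add: len tn tr scalar)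
qed

section \<open>Disjoint unions of directed cycles\<close>

lemma cycle_arcs_subset: "cycle_arcs ws \<subseteq> set ws \<times> set ws"
  by (auto simp: cycle_arcs_def intro!: nth_mem mod_less_divisor)

lemma cycle_arcs_out_exists:
  assumes "u \<in> set ws"
  shows "\<exists>v. (u, v) \<in> cycle_arcs ws"
  using assms by (auto simp: cycle_arcs_def in_set_conv_nth)

lemma cycle_arcs_out_unique:
  assumes "distinct ws" "(u, v) \<in> cycle_arcs ws" "(u, v') \<in> cycle_arcs ws"
  shows "v = v'"
  using assms by (auto simp: cycle_arcs_def nth_eq_iff_index_eq)

lemma cycle_arcs_in_unique:
  assumes "distinct ws" "(u, v) \<in> cycle_arcs ws" "(u', v) \<in> cycle_arcs ws"
  shows "u = u'"
proof -
  obtain t t' where t: "t < length ws" "t' < length ws" "u = ws ! t" "u' = ws ! t'"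
    and "ws ! ((t + 1) mod length ws) = ws ! ((t' + 1) mod length ws)"
    using assms(2,3) by (auto simp: cycle_arcs_def)
  moreover have "0 < length ws"
    using t(1) by linarith
  then have "(t + 1) mod length ws < length ws" "(t' + 1) mod length ws < length ws"
    by simp_all
  ultimately have "(t + 1) mod length ws = (t' + 1) mod length ws"
    using assms(1) by (simp add: nth_eq_iff_index_eq)
  then have "t = t'"
    using t(1,2) by (auto simp: mod_Suc split: if_splits)
  then show ?thesis
    using t by simp
qed

text \<open>For \<open>x\<close> on a cycle of \<open>f\<close>, \<open>funpow_dist1 f x x\<close> is the length of that cycle.\<close>
definition orbit_list :: "('a \<Rightarrow> 'a) \<Rightarrow> 'a \<Rightarrow> 'a list" where
  "orbit_list f x = map (\<lambda>k. (f ^^ k) x) [0..<funpow_dist1 f x x]"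

lemma length_orbit_list: "length (orbit_list f x) = funpow_dist1 f x x"
  by (simp add: orbit_list_def del: upt_Suc)

lemma set_orbit_list:
  assumes "x \<in> orbit f x"
  shows "set (orbit_list f x) = orbit f x"
  using orbit_conv_funpow_dist1[OF assms] by (simp add: orbit_list_def del: upt_Suc)

lemma distinct_orbit_list: "x \<in> orbit f x \<Longrightarrow> distinct (orbit_list f x)"
  by (simp add: orbit_list_def distinct_map inj_on_funpow_dist1 del: upt_Suc)

lemma length_orbit_list_ge_2:
  assumes "x \<in> orbit f x" and "f x \<noteq> x"
  shows "2 \<le> length (orbit_list f x)"
proof -
  have "x \<in> orbit f (f x)"
    using assms by (intro orbit_step) auto
  then have "funpow_dist f (f x) x \<noteq> 0"
    using assms(2) by (simp add: funpow_dist_0_eq)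
  then show ?thesis
    by (simp add: orbit_list_def)
qed

lemma cycle_arcs_orbit_list:
  assumes self: "x \<in> orbit f x"
  shows "cycle_arcs (orbit_list f x) = {(y, f y) | y. y \<in> orbit f x}"
proof -
  let ?p = "funpow_dist1 f x x"
  have period: "(f ^^ ?p) x = x"
    using self by (rule funpow_dist1_prop)
  have nth: "orbit_list f x ! t = (f ^^ t) x" if "t < ?p" for t
    using that by (simp add: orbit_list_def del: upt_Suc)
  have "cycle_arcs (orbit_list f x)
      = (\<lambda>t. (orbit_list f x ! t, orbit_list f x ! ((t + 1) mod ?p))) ` {0..<?p}"
    by (auto simp: cycle_arcs_def length_orbit_list)
  also have "\<dots> = (\<lambda>t. ((f ^^ t) x, f ((f ^^ t) x))) ` {0..<?p}"
    by (rule image_cong) (simp_all add: nth funpow_mod_eq[OF period])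
  also have "\<dots> = {(y, f y) | y. y \<in> orbit f x}"
    by (auto simp: orbit_conv_funpow_dist1[OF self])
  finally show ?thesis .
qed

lemma Min_orbit_permutes:
  fixes f :: "'a :: linorder \<Rightarrow> 'a"
  assumes perm: "f permutes S" and "finite S" and x: "x \<in> S"
  shows "Min (orbit f x) \<in> S \<and> orbit f (Min (orbit f x)) = orbit f x"
proof -
  have "x \<in> orbit f x"
    by (rule permutation_self_in_orbit[OF permutes_imp_permutation[OF \<open>finite S\<close> perm]])
  then have "Min (orbit f x) \<in> orbit f x"
    using finite_orbit by (intro Min_in) auto
  moreover have "orbit f x \<subseteq> S"
    using permutes_orbit_subset[OF perm x] .
  ultimately show ?thesis
    using cyclic_on_orbit[OF perm \<open>finite S\<close>] by (auto simp: orbit_cyclic_eq3)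
qed

lemma direct_sum_of_cycles_permutes:
  assumes perm: "f permutes {0..<n}" and no_fix: "\<forall>i < n. f i \<noteq> i"
  shows "direct_sum_of_cycles n {(i, f i) | i. i < n}"
proof -
  have self: "x \<in> orbit f x" for x
    by (rule permutation_self_in_orbit[OF permutes_imp_permutation[OF finite_atLeastLessThan perm]])
  have orbit_eq: "orbit f y = orbit f x" if "y \<in> orbit f x" for x y
    using cyclic_on_orbit[OF perm] that by (simp add: orbit_cyclic_eq3)
  \<comment> \<open>Listing each cycle from its least vertex makes the list depend only on the orbit.\<close>
  define cyc where "cyc x = orbit_list f (Min (orbit f x))" for x
  have set_cyc: "set (cyc x) = orbit f x"
    and arcs_cyc: "cycle_arcs (cyc x) = {(y, f y) | y. y \<in> orbit f x}" if "x < n" for x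
    using Min_orbit_permutes[OF perm _, of x] that set_orbit_list[OF self] cycle_arcs_orbit_list[OF self]
    by (simp_all add: cyc_def)
  have orbits_cover: "(\<Union>x \<in> {0..<n}. orbit f x) = {0..<n}"
    using self permutes_orbit_subset[OF perm] by fastforce
  show ?thesis
    unfolding direct_sum_of_cycles_def
  proof (intro exI[of _ "cyc ` {0..<n}"] conjI)
    have "f (Min (orbit f x)) \<noteq> Min (orbit f x)" if "x < n" for x
      using Min_orbit_permutes[OF perm _, of x] that no_fix by simp
    then show "\<forall>ws \<in> cyc ` {0..<n}. distinct ws \<and> 2 \<le> length ws"
      using self by (auto simp: cyc_def distinct_orbit_list length_orbit_list_ge_2)
    show "\<forall>ws1 \<in> cyc ` {0..<n}. \<forall>ws2 \<in> cyc ` {0..<n}. ws1 \<noteq> ws2 \<longrightarrow> set ws1 \<inter> set ws2 = {}"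
    proof (intro ballI impI)
      fix ws1 ws2 assume "ws1 \<in> cyc ` {0..<n}" "ws2 \<in> cyc ` {0..<n}" "ws1 \<noteq> ws2"
      then obtain x1 x2 where x: "x1 < n" "x2 < n" and ws: "ws1 = cyc x1" "ws2 = cyc x2"
        by auto
      then have "orbit f x1 \<noteq> orbit f x2"
        using \<open>ws1 \<noteq> ws2\<close> by (auto simp: cyc_def)
      then have "orbit f x1 \<inter> orbit f x2 = {}"
        by (metis disjoint_iff orbit_eq)
      then show "set ws1 \<inter> set ws2 = {}"
        using x ws set_cyc by simp
    qed
    show "(\<Union>ws \<in> cyc ` {0..<n}. set ws) = {0..<n}"
      using set_cyc orbits_cover by simp
    show "{(i, f i) | i. i < n} = (\<Union>ws \<in> cyc ` {0..<n}. cycle_arcs ws)"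
      using arcs_cyc orbits_cover self by fastforce
  qed
qed

definition permutation_digraph :: "nat \<Rightarrow> (nat \<times> nat) set \<Rightarrow> bool" where
  "permutation_digraph n E \<longleftrightarrow>
     (\<forall>i < n. outdeg E i = 1) \<and> (\<forall>i j k. (i, k) \<in> E \<longrightarrow> (j, k) \<in> E \<longrightarrow> i = j)"

section \<open>The matrix \<open>A_alpha\<close> of a digraph\<close>

lemma A_alpha_carrier: "A_alpha \<alpha> n E \<in> carrier_mat n n"
  by (simp add: A_alpha_def outdeg_mat_def adj_mat_def)

lemma A_alpha_index:
  assumes "i < n" "j < n"
  shows "A_alpha \<alpha> n E $$ (i, j)
    = (if i = j then \<alpha> * outdeg E i else 0) + (if (i, j) \<in> E then 1 - \<alpha> else 0)"
  using assms by (simp add: A_alpha_def outdeg_mat_def adj_mat_def)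

lemma A_alpha_0: "A_alpha 0 n E = adj_mat n E"
  by (rule eq_matI) (auto simp: A_alpha_def outdeg_mat_def adj_mat_def)

locale loopless_digraph =
  fixes n :: nat and E :: "(nat \<times> nat) set"
  assumes arcs: "E \<subseteq> {0..<n} \<times> {0..<n}"
    and loopless: "\<forall>i. (i, i) \<notin> E"
begin

lemma finite_out_neighbours: "finite {j. (i, j) \<in> E}"
  by (rule finite_subset[of _ "{0..<n}"]) (use arcs in auto)

lemma card_arcs: "card E = (\<Sum>i < n. outdeg E i)"
proof -
  have "E = Sigma {..<n} (\<lambda>i. {j. (i, j) \<in> E})"
    using arcs by auto
  also have "card \<dots> = (\<Sum>i < n. outdeg E i)"
    by (simp add: card_SigmaI finite_out_neighbours outdeg_def)
  finally show ?thesis .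
qed

lemma A_alpha_row_sum_squares:
  assumes i: "i < n"
  shows "(\<Sum>k = 0..<n. (A_alpha \<alpha> n E $$ (i, k))\<^sup>2)
    = \<alpha>\<^sup>2 * (real (outdeg E i))\<^sup>2 + (1 - \<alpha>)\<^sup>2 * outdeg E i"
proof -
  have "(\<Sum>k = 0..<n. (A_alpha \<alpha> n E $$ (i, k))\<^sup>2)
      = (\<Sum>k = 0..<n. (if k = i then \<alpha>\<^sup>2 * (real (outdeg E i))\<^sup>2 else 0)
                      + (if (i, k) \<in> E then (1 - \<alpha>)\<^sup>2 else 0))"
    using i loopless by (intro sum.cong) (auto simp: A_alpha_index power_mult_distrib)
  also have "\<dots> = \<alpha>\<^sup>2 * (real (outdeg E i))\<^sup>2 + (\<Sum>k = 0..<n. if (i, k) \<in> E then (1 - \<alpha>)\<^sup>2 else 0)"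
    using i by (simp add: sum.distrib)
  also have "(\<Sum>k = 0..<n. if (i, k) \<in> E then (1 - \<alpha>)\<^sup>2 else 0)
      = (\<Sum>k \<in> {k \<in> {0..<n}. (i, k) \<in> E}. (1 - \<alpha>)\<^sup>2)"
    by (rule sum.inter_filter[symmetric]) simp
  also have "{k \<in> {0..<n}. (i, k) \<in> E} = {k. (i, k) \<in> E}"
    using arcs by auto
  finally show ?thesis
    by (simp add: outdeg_def)
qed

lemma mat_trace_A_alpha_gram:
  "mat_trace (A_alpha \<alpha> n E * transpose_mat (A_alpha \<alpha> n E))
    = (1 - \<alpha>)\<^sup>2 * card E + \<alpha>\<^sup>2 * (\<Sum>i < n. (real (outdeg E i))\<^sup>2)"
proof -
  have "mat_trace (A_alpha \<alpha> n E * transpose_mat (A_alpha \<alpha> n E))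
      = (\<Sum>i = 0..<n. \<Sum>k = 0..<n. (A_alpha \<alpha> n E $$ (i, k))\<^sup>2)"
    by (rule mat_trace_mult_transpose[OF A_alpha_carrier])
  also have "\<dots> = (\<Sum>i = 0..<n. \<alpha>\<^sup>2 * (real (outdeg E i))\<^sup>2 + (1 - \<alpha>)\<^sup>2 * outdeg E i)"
    by (rule sum.cong) (simp_all add: A_alpha_row_sum_squares)
  finally show ?thesis
    by (simp add: card_arcs sum.distrib sum_distrib_left atLeast0LessThan)
qed

lemma adj_mat_gram_index:
  assumes "i < n" "j < n"
  shows "(adj_mat n E * transpose_mat (adj_mat n E)) $$ (i, j) = card {k. (i, k) \<in> E \<and> (j, k) \<in> E}"
proof -
  have "(adj_mat n E * transpose_mat (adj_mat n E)) $$ (i, j)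
      = (\<Sum>k = 0..<n. adj_mat n E $$ (i, k) * adj_mat n E $$ (j, k))"
    using assms by (intro gram_index) (simp_all add: adj_mat_def)
  also have "\<dots> = (\<Sum>k = 0..<n. if (i, k) \<in> E \<and> (j, k) \<in> E then 1 else 0)"
    using assms by (intro sum.cong) (auto simp: adj_mat_def)
  also have "\<dots> = card {k \<in> {0..<n}. (i, k) \<in> E \<and> (j, k) \<in> E}"
    by (simp add: sum.inter_filter[symmetric])
  also have "{k \<in> {0..<n}. (i, k) \<in> E \<and> (j, k) \<in> E} = {k. (i, k) \<in> E \<and> (j, k) \<in> E}"
    using arcs by auto
  finally show ?thesis .
qed

lemma adj_mat_gram_eq_one:
  assumes "permutation_digraph n E"
  shows "adj_mat n E * transpose_mat (adj_mat n E) = 1\<^sub>m n"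
proof (rule eq_matI)
  fix i j assume "i < dim_row (1\<^sub>m n :: real mat)" "j < dim_col (1\<^sub>m n :: real mat)"
  then have ij: "i < n" "j < n" by simp_all
  have "card {k. (i, k) \<in> E \<and> (j, k) \<in> E} = (if i = j then 1 else 0)"
  proof (cases "i = j")
    case False
    then have "{k. (i, k) \<in> E \<and> (j, k) \<in> E} = {}"
      using assms by (auto simp: permutation_digraph_def)
    with False show ?thesis by (metis card.empty)
  qed (use assms ij in \<open>simp add: permutation_digraph_def outdeg_def\<close>)
  then show "(adj_mat n E * transpose_mat (adj_mat n E)) $$ (i, j) = 1\<^sub>m n $$ (i, j)"
    using ij by (simp add: adj_mat_gram_index)
qed (simp_all add: adj_mat_def)

lemma permutation_digraph_if_adj_mat_gram:
  assumes gram: "adj_mat n E * transpose_mat (adj_mat n E) = c \<cdot>\<^sub>m 1\<^sub>m n"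
    and arc: "(i0, k0) \<in> E"
  shows "permutation_digraph n E"
proof -
  have i0: "i0 < n" using arc arcs by auto
  have entry: "card {k. (i, k) \<in> E \<and> (j, k) \<in> E} = (if i = j then c else 0)" if "i < n" "j < n" for i j
    using that by (simp flip: adj_mat_gram_index add: gram)
  have outdeg: "outdeg E i = outdeg E i0" if "i < n" for i
    using entry[OF that that] entry[OF i0 i0] by (simp add: outdeg_def)
  have heads: "i = j" if "(i, k) \<in> E" "(j, k) \<in> E" for i j k
  proof (rule ccontr)
    assume "i \<noteq> j"
    moreover have "i < n" "j < n" using that arcs by auto
    ultimately have "real (card {k. (i, k) \<in> E \<and> (j, k) \<in> E}) = 0"
      using entry by simp
    then show False
      using that finite_out_neighbours[of i] by (auto simp: card_eq_0_iff)
  qed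
  have "n * outdeg E i0 = card E"
    by (simp add: card_arcs outdeg)
  also have "card E \<le> n"
  proof -
    have "inj_on snd E" "snd ` E \<subseteq> {0..<n}"
      using heads arcs by (auto intro: inj_onI)
    then have "card E \<le> card {0..<n}"
      by (intro card_inj_on_le) simp_all
    then show ?thesis by simp
  qed
  finally have "outdeg E i0 \<le> 1"
    using i0 by simp
  moreover have "outdeg E i0 \<noteq> 0"
    using arc finite_out_neighbours[of i0] by (auto simp: outdeg_def)
  ultimately show ?thesis
    using outdeg heads by (auto simp: permutation_digraph_def)
qed

lemma alpha_eq_0_if_A_alpha_gram:
  assumes "0 \<le> \<alpha>" "\<alpha> < 1"
    and gram: "A_alpha \<alpha> n E * transpose_mat (A_alpha \<alpha> n E) = c \<cdot>\<^sub>m 1\<^sub>m n"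
    and arc: "(i0, j0) \<in> E"
  shows "\<alpha> = 0"
proof (rule ccontr)
  assume "\<alpha> \<noteq> 0"
  let ?A = "A_alpha \<alpha> n E"
  have i0: "i0 < n" and j0: "j0 < n" and "i0 \<noteq> j0"
    using arc arcs loopless by auto
  have diag: "\<alpha>\<^sup>2 * (real (outdeg E i))\<^sup>2 + (1 - \<alpha>)\<^sup>2 * outdeg E i = c" if i: "i < n" for i
  proof -
    have "c = (?A * transpose_mat ?A) $$ (i, i)"
      using i by (simp add: gram)
    also have "\<dots> = (\<Sum>k = 0..<n. (?A $$ (i, k))\<^sup>2)"
      using gram_index[OF A_alpha_carrier i i] by (simp add: power2_eq_square)
    finally show ?thesis
      using A_alpha_row_sum_squares[OF i] by simp
  qed
  have "outdeg E i0 \<noteq> 0"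
    using arc finite_out_neighbours[of i0] by (auto simp: outdeg_def)
  then have "0 < (1 - \<alpha>)\<^sup>2 * real (outdeg E i0)"
    using \<open>\<alpha> < 1\<close> by simp
  moreover have "0 \<le> \<alpha>\<^sup>2 * (real (outdeg E i0))\<^sup>2"
    by simp
  ultimately have "c > 0"
    using diag[OF i0] by linarith
  then have "outdeg E j0 \<noteq> 0"
    using diag[OF j0] by (metis of_nat_0 less_irrefl mult_zero_right power_zero_numeral add_0)
  then have "0 < ?A $$ (i0, j0) * ?A $$ (j0, j0)"
    using assms(1,2) \<open>\<alpha> \<noteq> 0\<close> i0 j0 \<open>i0 \<noteq> j0\<close> arc loopless by (simp add: A_alpha_index)
  also have "\<dots> \<le> (?A * transpose_mat ?A) $$ (i0, j0)"
    using assms(1,2) i0 j0 by (intro gram_index_ge[OF A_alpha_carrier]) (auto simp: A_alpha_index)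
  also have "\<dots> = 0"
    using i0 j0 \<open>i0 \<noteq> j0\<close> by (simp add: gram)
  finally show False by simp
qed

lemma permutation_digraph_permutes:
  assumes perm: "permutation_digraph n E"
  obtains f where "f permutes {0..<n}" and "E = {(i, f i) | i. i < n}"
proof -
  have unique: "\<exists>!k. (i, k) \<in> E" if i: "i < n" for i
  proof -
    obtain v where "{k. (i, k) \<in> E} = {v}"
      using perm i by (auto simp: permutation_digraph_def outdeg_def card_1_singleton_iff)
    then have "(i, k) \<in> E \<longleftrightarrow> k = v" for k
      by blast
    then show ?thesis by auto
  qed
  define f where "f i = (if i < n then THE k. (i, k) \<in> E else i)" for i
  have arc_f: "(i, f i) \<in> E" if "i < n" for i
    using theI'[OF unique[OF that]] that by (simp add: f_def)
  have f_eq: "f i = k" if "(i, k) \<in> E" for i k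
  proof -
    have "i < n" using that arcs by auto
    then show ?thesis
      using that arc_f unique by blast
  qed
  have heads: "i = j" if "(i, k) \<in> E" "(j, k) \<in> E" for i j k
    using perm that unfolding permutation_digraph_def by blast
  have "inj_on f {0..<n}"
  proof (rule inj_onI)
    fix x y assume "x \<in> {0..<n}" "y \<in> {0..<n}" "f x = f y"
    then have "(x, f x) \<in> E" "(y, f x) \<in> E"
      using arc_f[of x] arc_f[of y] by simp_all
    then show "x = y" by (rule heads)
  qed
  moreover have "f ` {0..<n} \<subseteq> {0..<n}"
  proof
    fix y assume "y \<in> f ` {0..<n}"
    then obtain x where "x < n" "y = f x" by auto
    then have "(x, y) \<in> {0..<n} \<times> {0..<n}"
      using arc_f arcs by blast
    then show "y \<in> {0..<n}" by simp
  qed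
  ultimately have "bij_betw f {0..<n} {0..<n}"
    by (simp add: bij_betw_def endo_inj_surj)
  then have "f permutes {0..<n}"
    by (rule bij_imp_permutes) (simp add: f_def)
  moreover have "E = {(i, f i) | i. i < n}"
    using arcs arc_f f_eq by fastforce
  ultimately show ?thesis
    using that by blast
qed

lemma direct_sum_of_cycles_if_permutation_digraph:
  assumes "permutation_digraph n E"
  shows "direct_sum_of_cycles n E"
proof -
  obtain f where perm: "f permutes {0..<n}" and E: "E = {(i, f i) | i. i < n}"
    using permutation_digraph_permutes[OF assms] .
  have "\<forall>i < n. f i \<noteq> i"
    using loopless E by auto
  then show ?thesis
    using direct_sum_of_cycles_permutes[OF perm] E by simp
qed

lemma permutation_digraph_if_direct_sum_of_cycles:
  assumes "direct_sum_of_cycles n E"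
  shows "permutation_digraph n E"
proof -
  obtain C where cycles: "\<forall>ws \<in> C. distinct ws \<and> length ws \<ge> 2"
    and disj: "\<forall>ws1 \<in> C. \<forall>ws2 \<in> C. ws1 \<noteq> ws2 \<longrightarrow> set ws1 \<inter> set ws2 = {}"
    and cover: "(\<Union>ws \<in> C. set ws) = {0..<n}"
    and E: "E = (\<Union>ws \<in> C. cycle_arcs ws)"
    using assms unfolding direct_sum_of_cycles_def by blast
  have same_cycle: "ws1 = ws2" if "ws1 \<in> C" "ws2 \<in> C" "x \<in> set ws1" "x \<in> set ws2" for ws1 ws2 x
    using disj that by blast
  have "outdeg E i = 1" if i: "i < n" for i
  proof -
    have "i \<in> (\<Union>ws \<in> C. set ws)"
      using cover i by simp
    then obtain ws where ws: "ws \<in> C" "i \<in> set ws"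
      by blast
    then obtain v where v: "(i, v) \<in> cycle_arcs ws"
      using cycle_arcs_out_exists by metis
    have "k = v" if "(i, k) \<in> E" for k
    proof -
      obtain ws' where "ws' \<in> C" "(i, k) \<in> cycle_arcs ws'"
        using \<open>(i, k) \<in> E\<close> E by auto
      moreover from this have "ws' = ws"
        using same_cycle ws cycle_arcs_subset by blast
      ultimately show ?thesis
        using v cycles cycle_arcs_out_unique by metis
    qed
    then have "{k. (i, k) \<in> E} = {v}"
      using v ws E by auto
    then show ?thesis
      by (simp add: outdeg_def)
  qed
  moreover have "i = j" if arcs_ij: "(i, k) \<in> E" "(j, k) \<in> E" for i j k
  proof -
    obtain ws1 ws2 where "ws1 \<in> C" "(i, k) \<in> cycle_arcs ws1" "ws2 \<in> C" "(j, k) \<in> cycle_arcs ws2"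
      using arcs_ij E by auto
    moreover from this have "ws1 = ws2"
      using same_cycle cycle_arcs_subset by blast
    ultimately show ?thesis
      using cycles cycle_arcs_in_unique by metis
  qed
  ultimately show ?thesis
    by (simp add: permutation_digraph_def)
qed

lemma A_alpha_gram_eq_smult_one_iff:
  assumes "0 \<le> \<alpha>" "\<alpha> < 1"
  shows "(\<exists>c. A_alpha \<alpha> n E * transpose_mat (A_alpha \<alpha> n E) = c \<cdot>\<^sub>m 1\<^sub>m n)
    \<longleftrightarrow> E = {} \<or> (\<alpha> = 0 \<and> direct_sum_of_cycles n E)"
proof
  assume "\<exists>c. A_alpha \<alpha> n E * transpose_mat (A_alpha \<alpha> n E) = c \<cdot>\<^sub>m 1\<^sub>m n"
  then obtain c where gram: "A_alpha \<alpha> n E * transpose_mat (A_alpha \<alpha> n E) = c \<cdot>\<^sub>m 1\<^sub>m n" ..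
  show "E = {} \<or> (\<alpha> = 0 \<and> direct_sum_of_cycles n E)"
  proof (cases "E = {}")
    case False
    then obtain i j where arc: "(i, j) \<in> E" by auto
    then have "\<alpha> = 0"
      using alpha_eq_0_if_A_alpha_gram[OF assms gram] by blast
    moreover have "permutation_digraph n E"
      using gram arc \<open>\<alpha> = 0\<close> by (intro permutation_digraph_if_adj_mat_gram) (simp_all add: A_alpha_0)
    ultimately show ?thesis
      by (simp add: direct_sum_of_cycles_if_permutation_digraph)
  qed simp
next
  assume "E = {} \<or> (\<alpha> = 0 \<and> direct_sum_of_cycles n E)"
  then show "\<exists>c. A_alpha \<alpha> n E * transpose_mat (A_alpha \<alpha> n E) = c \<cdot>\<^sub>m 1\<^sub>m n"
  proof
    assume "E = {}"
    then have "A_alpha \<alpha> n E = 0\<^sub>m n n"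
      by (intro eq_matI) (simp_all add: A_alpha_def outdeg_mat_def adj_mat_def outdeg_def)
    then have "A_alpha \<alpha> n E * transpose_mat (A_alpha \<alpha> n E) = 0 \<cdot>\<^sub>m 1\<^sub>m n"
      by (intro eq_matI) auto
    then show ?thesis ..
  next
    assume "\<alpha> = 0 \<and> direct_sum_of_cycles n E"
    then have "A_alpha \<alpha> n E * transpose_mat (A_alpha \<alpha> n E) = 1\<^sub>m n"
      by (simp add: A_alpha_0 adj_mat_gram_eq_one permutation_digraph_if_direct_sum_of_cycles)
    then show ?thesis
      by (intro exI[of _ 1]) auto
  qed
qed

end

theorem theorem3p1:
  fixes n :: nat and E :: "(nat \<times> nat) set" and \<alpha> :: real
  assumes "E \<subseteq> {0..<n} \<times> {0..<n}"
    and "\<forall>i. (i, i) \<notin> E"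
    and "0 \<le> \<alpha>" and "\<alpha> < 1"
  shows "alpha_trace_norm \<alpha> n E
           \<le> sqrt (real n * ((1 - \<alpha>)^2 * real (card E)
                 + \<alpha>^2 * (\<Sum>i<n. (real (outdeg E i))^2)))
       \<and> (alpha_trace_norm \<alpha> n E
           = sqrt (real n * ((1 - \<alpha>)^2 * real (card E)
                 + \<alpha>^2 * (\<Sum>i<n. (real (outdeg E i))^2)))
          \<longleftrightarrow> E = {} \<or> (\<alpha> = 0 \<and> direct_sum_of_cycles n E))"
proof -
  interpret loopless_digraph n E
    using assms(1,2) by unfold_locales
  show ?thesis
    using trace_norm_le_sqrt_trace_gram[OF A_alpha_carrier[of \<alpha> n E]]
      trace_norm_eq_sqrt_trace_gram_iff[OF A_alpha_carrier[of \<alpha> n E]]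
      A_alpha_gram_eq_smult_one_iff[OF assms(3,4)]
    by (simp add: alpha_trace_norm_def mat_trace_A_alpha_gram)
qed

end
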